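(* Let $L\subseteq Q$ be an extension of Lie algebras over $\Phi$ such that $Q$ is a weak algebra of quotients of $L$ and $L$ is strongly non-degenerate. Then: (i) $Q$ is strongly non-degenerate; (ii) $\mathrm{Ann}_Q(L)=\mathrm{QAnn}_Q(L)=0$.
   Context: $\Phi$ is a unital commutative ring in which $2$ and $3$ are invertible; all algebras are $\Phi$-modules. An extension of Lie algebras $L\subseteq Q$ means $L$ is a Lie subalgebra of $Q$. $Q$ is a weak algebra of quotients of $L$ if for every non-zero $q\in Q$ there exists $x\in L$ with $0\neq [x,q]\in L$. An element $x$ of a Lie algebra $M$ is an absolute zero divisor if $[x,[x,M]]=0$; $M$ is strongly non-degenerate if it has no non-zero absolute zero divisors. For subsets $X,Y$ of a Lie algebra, $\mathrm{Ann}_X(Y)=\{x\in X: [x,Y]=0\}$ and $\mathrm{QAnn}_X(Y)=\{x\in X: [x,[x,Y]]=0\}$. *)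

theory Defs
  imports Complex_Main
begin

text \<open>A Lie algebra over the commutative ring 'r (playing the role of Phi):
  the carrier is the whole type 'q, a module via scale, with bracket br.\<close>
definition lie_algebra :: "('r::comm_ring_1 \<Rightarrow> 'q::ab_group_add \<Rightarrow> 'q) \<Rightarrow> ('q \<Rightarrow> 'q \<Rightarrow> 'q) \<Rightarrow> bool" where
  "lie_algebra scale br \<longleftrightarrow>
     module scale \<and>
     (\<forall>x y z. br (x + y) z = br x z + br y z) \<and>
     (\<forall>x y z. br x (y + z) = br x y + br x z) \<and>
     (\<forall>a x y. br (scale a x) y = scale a (br x y)) \<and>
     (\<forall>a x y. br x (scale a y) = scale a (br x y)) \<and>
     (\<forall>x. br x x = 0) \<and>
     (\<forall>x y z. br x (br y z) + br y (br z x) + br z (br x y) = 0)"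

definition lie_subalgebra :: "('r::comm_ring_1 \<Rightarrow> 'q::ab_group_add \<Rightarrow> 'q) \<Rightarrow> ('q \<Rightarrow> 'q \<Rightarrow> 'q) \<Rightarrow> 'q set \<Rightarrow> bool" where
  "lie_subalgebra scale br L \<longleftrightarrow>
     module.subspace scale L \<and> (\<forall>x\<in>L. \<forall>y\<in>L. br x y \<in> L)"

definition weak_algebra_of_quotients :: "('q::ab_group_add \<Rightarrow> 'q \<Rightarrow> 'q) \<Rightarrow> 'q set \<Rightarrow> bool" where
  "weak_algebra_of_quotients br L \<longleftrightarrow>
     (\<forall>q. q \<noteq> 0 \<longrightarrow> (\<exists>x\<in>L. br x q \<noteq> 0 \<and> br x q \<in> L))"

definition absolute_zero_divisor :: "('q::ab_group_add \<Rightarrow> 'q \<Rightarrow> 'q) \<Rightarrow> 'q set \<Rightarrow> 'q \<Rightarrow> bool" where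
  "absolute_zero_divisor br M x \<longleftrightarrow> x \<in> M \<and> (\<forall>y\<in>M. br x (br x y) = 0)"

definition strongly_non_degenerate :: "('q::ab_group_add \<Rightarrow> 'q \<Rightarrow> 'q) \<Rightarrow> 'q set \<Rightarrow> bool" where
  "strongly_non_degenerate br M \<longleftrightarrow> (\<forall>x. absolute_zero_divisor br M x \<longrightarrow> x = 0)"

definition Ann :: "('q \<Rightarrow> 'q \<Rightarrow> 'q::zero) \<Rightarrow> 'q set \<Rightarrow> 'q set \<Rightarrow> 'q set" where
  "Ann br X Y = {x \<in> X. \<forall>y\<in>Y. br x y = 0}"

definition QAnn :: "('q \<Rightarrow> 'q \<Rightarrow> 'q::zero) \<Rightarrow> 'q set \<Rightarrow> 'q set \<Rightarrow> 'q set" where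
  "QAnn br X Y = {x \<in> X. \<forall>y\<in>Y. br x (br x y) = 0}"

end

theory Submission
  imports Defs
begin

(* Write D = ad q for an element q of Q with [q,[q,L]] = 0, i.e. q in QAnn_Q(L).
   If q were non-zero, the weak-quotient property gives y in L with s = [q,y] a non-zero element
   of L.  A purely ring-theoretic computation (using only bilinearity, the Jacobi identity and
   the invertibility of 2 and 3) shows that, for every u in L, the element ad_s^2 u is an
   absolute zero divisor of L; strong non-degeneracy of L then forces ad_s^2 u = 0 for all u,
   i.e. s is an absolute zero divisor of L, so s = 0, a contradiction.  Hence QAnn_Q(L) = 0.
   Both remaining claims follow: Ann_Q(L) is contained in QAnn_Q(L), and an absolute zero
   divisor of Q lies in QAnn_Q(L). *)

locale lie_ring =
  fixes br :: "'q::ab_group_add \<Rightarrow> 'q \<Rightarrow> 'q"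
  assumes bracket_add_left: "br (x + y) z = br x z + br y z"
    and bracket_add_right: "br x (y + z) = br x y + br x z"
    and bracket_self: "br x x = 0"
    and jacobi: "br x (br y z) + br y (br z x) + br z (br x y) = 0"
    and two_torsion_free: "(v::'q) + v = 0 \<Longrightarrow> v = 0"
    and three_torsion_free: "(v::'q) + v + v = 0 \<Longrightarrow> v = 0"
begin

lemma bracket_zero_left [simp]: "br 0 z = 0"
  using bracket_add_left[of 0 0 z] by simp

lemma bracket_zero_right [simp]: "br z 0 = 0"
  using bracket_add_right[of z 0 0] by simp

lemma bracket_minus_left: "br (- x) z = - br x z"
  using bracket_add_left[of x "- x" z] by (simp add: eq_neg_iff_add_eq_0 add.commute)

lemma bracket_minus_right: "br z (- x) = - br z x"
  using bracket_add_right[of z x "- x"] by (simp add: eq_neg_iff_add_eq_0 add.commute)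

lemma bracket_diff_left: "br (x - y) z = br x z - br y z"
  by (simp only: diff_conv_add_uminus bracket_add_left bracket_minus_left)

lemma bracket_diff_right: "br z (x - y) = br z x - br z y"
  by (simp only: diff_conv_add_uminus bracket_add_right bracket_minus_right)

lemma bracket_anticomm: "br x y = - br y x"
proof -
  have "br x x + br y x + (br x y + br y y) = 0"
    using bracket_self[of "x + y"] by (simp add: bracket_add_left bracket_add_right)
  hence "br x y + br y x = 0" by (simp add: bracket_self add.commute)
  thus ?thesis by (simp add: eq_neg_iff_add_eq_0)
qed

lemma jacobi_left: "br (br x y) z = br x (br y z) - br y (br x z)"
  using jacobi[of x y z] bracket_anticomm[of z "br x y"] bracket_anticomm[of "br z x" y]
    bracket_anticomm[of z x]
  by (simp add: bracket_minus_right algebra_simps)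

lemma leibniz: "br z (br u v) = br (br z u) v + br u (br z v)"
  by (simp add: jacobi_left)

lemmas bracket_expand = jacobi_left bracket_add_left bracket_add_right
  bracket_minus_left bracket_minus_right bracket_diff_left bracket_diff_right

end

locale nondegenerate_subring = lie_ring br for br :: "'q::ab_group_add \<Rightarrow> 'q \<Rightarrow> 'q" +
  fixes L :: "'q set"
  assumes sub_zero: "0 \<in> L"
    and sub_add: "u \<in> L \<Longrightarrow> v \<in> L \<Longrightarrow> u + v \<in> L"
    and sub_neg: "u \<in> L \<Longrightarrow> - u \<in> L"
    and sub_bracket: "u \<in> L \<Longrightarrow> v \<in> L \<Longrightarrow> br u v \<in> L"
    and nondegenerate: "x \<in> L \<Longrightarrow> (\<And>v. v \<in> L \<Longrightarrow> br x (br x v) = 0) \<Longrightarrow> x = 0"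
begin

lemma sub_diff: "u \<in> L \<Longrightarrow> v \<in> L \<Longrightarrow> u - v \<in> L"
  using sub_add sub_neg by (metis diff_conv_add_uminus)

lemmas sub_closed [simp] = sub_zero sub_add sub_neg sub_bracket sub_diff

end

section \<open>Quasi-annihilators of L\<close>

locale quasi_annihilator = nondegenerate_subring br L
  for br :: "'q::ab_group_add \<Rightarrow> 'q \<Rightarrow> 'q" and L +
  fixes q :: 'q
  assumes qann: "u \<in> L \<Longrightarrow> br q (br q u) = 0"
begin

text \<open>The images of L under D = ad q commute: apply D twice to [u,v] and cancel 2.\<close>
lemma q_images_commute:
  assumes "u \<in> L" "v \<in> L"
  shows "br (br q u) (br q v) = 0"
proof -
  have "br q (br q (br u v)) =
      br (br q (br q u)) v + br (br q u) (br q v) + (br (br q u) (br q v) + br u (br q (br q v)))"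
    by (simp add: leibniz[of q u v] bracket_add_right leibniz[of q "br q u" v] leibniz[of q u "br q v"])
  hence "br (br q u) (br q v) + br (br q u) (br q v) = 0"
    using assms qann by (simp add: add.assoc)
  thus ?thesis by (rule two_torsion_free)
qed

end

text \<open>The main configuration: q in QAnn(L), y in L and s = [q,y] in L.
  The goal of this locale is to show s = 0.  We abbreviate ad_s^2 by ad2.\<close>
locale qann_pair = quasi_annihilator br L q
  for br :: "'q::ab_group_add \<Rightarrow> 'q \<Rightarrow> 'q" and L q +
  fixes y s :: 'q
  assumes y_in: "y \<in> L" and s_in: "s \<in> L" and q_y: "br q y = s"
begin

abbreviation ad2 :: "'q \<Rightarrow> 'q" where "ad2 u \<equiv> br s (br s u)"

lemma q_s: "br q s = 0"
  using qann[OF y_in] q_y by simp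

lemma s_q_commute: "u \<in> L \<Longrightarrow> br s (br q u) = 0"
  using q_images_commute[OF y_in] q_y by simp

lemma q_s_commute: "u \<in> L \<Longrightarrow> br q (br s u) = 0"
  by (simp add: leibniz[of q s u] q_s s_q_commute)

lemma s_y_q: assumes m: "m \<in> L" shows "br s (br y (br q m)) = - ad2 m"
proof -
  have "br y (br q m) = br q (br y m) - br s m"
    using leibniz[of q y m] q_y by (simp add: algebra_simps)
  hence "br s (br y (br q m)) = br s (br q (br y m)) - ad2 m" by (simp add: bracket_diff_right)
  thus ?thesis using s_q_commute[of "br y m"] m y_in by simp
qed

lemma ad2_as_q_image: "u \<in> L \<Longrightarrow> ad2 u = br q (br y (br s u))"
  by (simp add: leibniz[of q y "br s u"] q_y q_s_commute)

lemma ad2_via_sy: "u \<in> L \<Longrightarrow> ad2 u = - br (br s y) (br q u)"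
  by (simp add: jacobi_left s_y_q s_q_commute)

lemma q_sy: "u \<in> L \<Longrightarrow> br q (br (br s y) u) = - ad2 u"
  using leibniz[of q "br s y" u] q_s_commute[OF y_in] ad2_via_sy by simp

lemma ad3_vanishes: "u \<in> L \<Longrightarrow> br s (ad2 u) = 0"
  using s_y_q[of "br s u"] q_s_commute[of u] s_in by simp

subsection \<open>The element ad2 y vanishes\<close>

text \<open>The mixed words ad_s ad_y ad_s^2 and ad_s^2 ad_y ad_s agree on L: expanding
  [ad_s^3 y, u] = 0 shows that 3 times their difference vanishes.\<close>
lemma mixed_words_agree:
  assumes u: "u \<in> L"
  shows "br s (br y (ad2 u)) = ad2 (br y (br s u))"
proof -
  have "br (br s (ad2 y)) u = 0" using ad3_vanishes[OF y_in] by simp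
  hence "br s (ad2 (br y u)) - ad2 (br y (br s u)) - (ad2 (br y (br s u)) - br s (br y (ad2 u)))
     - (ad2 (br y (br s u)) - br s (br y (ad2 u)) - (br s (br y (ad2 u)) - br y (br s (ad2 u)))) = 0"
    by (simp only: bracket_expand)
  hence "(br s (br y (ad2 u)) - ad2 (br y (br s u))) + (br s (br y (ad2 u)) - ad2 (br y (br s u)))
     + (br s (br y (ad2 u)) - ad2 (br y (br s u))) = 0"
    using ad3_vanishes[of "br y u"] ad3_vanishes[OF u] u y_in by (simp add: algebra_simps)
  hence "br s (br y (ad2 u)) - ad2 (br y (br s u)) = 0" by (rule three_torsion_free)
  thus ?thesis by simp
qed

text \<open>On the other hand the first word is the negative of the second (via D), so both vanish.\<close>
lemma mixed_word_vanishes: assumes u: "u \<in> L" shows "ad2 (br y (br s u)) = 0"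
proof -
  have "br s (br y (ad2 u)) = - ad2 (br y (br s u))"
    using ad2_as_q_image[of u] s_y_q[of "br y (br s u)"] s_in y_in u by simp
  hence "- ad2 (br y (br s u)) = ad2 (br y (br s u))"
    using mixed_words_agree[OF u] by simp
  hence "ad2 (br y (br s u)) + ad2 (br y (br s u)) = 0"
    by (metis add.left_inverse)
  thus ?thesis by (rule two_torsion_free)
qed

lemma mixed_word_vanishes': "u \<in> L \<Longrightarrow> br s (br y (ad2 u)) = 0"
  using mixed_words_agree mixed_word_vanishes by simp

text \<open>ad2 y is an absolute zero divisor of L: expand everything into words in ad_s, ad_y.\<close>
lemma ad2_y_vanishes: "ad2 y = 0"
proof (rule nondegenerate)
  show "ad2 y \<in> L" using y_in s_in by simp
next
  fix v assume v: "v \<in> L"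
  have "br (ad2 (br y (br s y))) (br s v) = 0" using mixed_word_vanishes[OF y_in] by simp
  hence word: "ad2 (br y (br y (ad2 v))) = 0"
    using v y_in s_in
    by (simp only: bracket_expand) (simp add: ad3_vanishes mixed_word_vanishes mixed_word_vanishes' algebra_simps)
  show "br (ad2 y) (br (ad2 y) v) = 0"
    using v y_in s_in
    by (simp only: bracket_expand) (simp add: ad3_vanishes mixed_word_vanishes mixed_word_vanishes' word algebra_simps)
qed

lemma sy_s: "br (br s y) s = 0"
  using bracket_anticomm[of "br s y" s] ad2_y_vanishes by simp

lemma sy_ad2: "u \<in> L \<Longrightarrow> br (br s y) (ad2 u) = 0"
  using y_in s_in by (simp add: jacobi_left ad3_vanishes mixed_word_vanishes')

subsection \<open>ad2 u is an absolute zero divisor of L\<close>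

lemma q_image_sy_s:
  assumes u: "u \<in> L"
  shows "br (br q u) (br (br s y) (br s u)) = - br (ad2 u) (br s u)"
proof -
  define m where "m = br (br s y) u"
  have m: "m \<in> L" using u y_in s_in by (simp add: m_def)
  have "br (br s y) (br s u) = br s m"
    using leibniz[of "br s y" s u] sy_s by (simp add: m_def)
  moreover have "br (br q u) (br s m) = br s (br (br q u) m)"
    using leibniz[of "br q u" s m] bracket_anticomm[of "br q u" s] s_q_commute[OF u] by simp
  moreover have "br (br q u) m = br q (br u m) + br u (ad2 u)"
    using leibniz[of q u m] q_sy[OF u] by (simp add: m_def bracket_minus_right)
  moreover have "br s (br q (br u m)) = 0" using s_q_commute u m by simp
  moreover have "br s (br u (ad2 u)) = br (br s u) (ad2 u)"
    using leibniz[of s u "ad2 u"] ad3_vanishes[OF u] by simp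
  ultimately show ?thesis
    using bracket_anticomm[of "br s u" "ad2 u"] by (simp add: bracket_add_right)
qed

text \<open>g = [ad2 u, [s,u]] satisfies g = -2g, hence g = 0.\<close>
lemma ad2_s_commute:
  assumes u: "u \<in> L"
  shows "br (ad2 u) (br s u) = 0"
proof -
  define g where "g = br (ad2 u) (br s u)"
  have "ad2 (br u (br s u)) = g + (br (br s u) (ad2 u) + br (br s u) (ad2 u)) + br u (ad2 (br s u))"
    by (simp add: g_def bracket_expand algebra_simps)
  hence "ad2 (br u (br s u)) = - g"
    using ad3_vanishes[OF u] bracket_anticomm[of "br s u" "ad2 u"] by (simp add: g_def)
  moreover have "ad2 (br u (br s u)) = - br (br s y) (br (br q u) (br s u))"
    using ad2_via_sy[of "br u (br s u)"] leibniz[of q u "br s u"] q_s_commute[OF u] u s_in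
    by simp
  ultimately have "g = br (br s y) (br (br q u) (br s u))" by simp
  also have "\<dots> = br (br (br s y) (br q u)) (br s u) + br (br q u) (br (br s y) (br s u))"
    by (rule leibniz)
  also have "\<dots> = - g + - g"
    using ad2_via_sy[OF u] q_image_sy_s[OF u] by (simp add: bracket_minus_left g_def)
  finally have "g + g + g = 0" by (simp add: algebra_simps)
  hence "g = 0" by (rule three_torsion_free)
  thus ?thesis by (simp add: g_def)
qed

text \<open>The elements ad2 u are D-images (of -[[s,y],u]), hence commute with each other and
  with D L; D and ad_s both kill [ad2 u, u].\<close>
lemma ad2_images_commute:
  assumes "u \<in> L" "v \<in> L"
  shows "br (ad2 u) (ad2 v) = 0"
proof -
  have "br (br q (br (br s y) u)) (br q (br (br s y) v)) = 0"
    using q_images_commute assms y_in s_in by simp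
  thus ?thesis using q_sy assms by (simp add: bracket_minus_left bracket_minus_right)
qed

lemma q_ad2: "u \<in> L \<Longrightarrow> br q (ad2 u) = 0"
  using leibniz[of q s "br s u"] q_s q_s_commute[of u] by simp

lemma ad2_q_commute:
  assumes "u \<in> L" "v \<in> L"
  shows "br (ad2 u) (br q v) = 0"
  using q_images_commute[of "br (br s y) u" v] q_sy assms y_in s_in by (simp add: bracket_minus_left)

lemma ad2_bracket_in_q_kernel: "u \<in> L \<Longrightarrow> br q (br (ad2 u) u) = 0"
  using leibniz[of q "ad2 u" u] q_ad2 ad2_q_commute by simp

lemma s_ad2_bracket: "u \<in> L \<Longrightarrow> br s (br (ad2 u) u) = 0"
  using leibniz[of s "ad2 u" u] ad3_vanishes ad2_s_commute by simp

text \<open>With p = ad2 u and w = [[s,y],u] we have [q,w] = -p, so (q, w, -p) is again a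
  qann_pair; this expresses ad_p^2 v through k = [p,u], which lies in the kernel of D and
  of ad_s, and the resulting terms cancel.\<close>
lemma ad2_absolute_zero_divisor:
  assumes u: "u \<in> L" and v: "v \<in> L"
  shows "br (ad2 u) (br (ad2 u) v) = 0"
proof -
  define p where "p = ad2 u"
  define w where "w = br (br s y) u"
  define k where "k = br p u"
  have in_L: "p \<in> L" "w \<in> L" "k \<in> L" using u y_in s_in by (auto simp: p_def w_def k_def)
  have k_kernel: "br q k = 0" "br s k = 0"
    using ad2_bracket_in_q_kernel[OF u] s_ad2_bracket[OF u] by (simp_all add: k_def p_def)
  interpret shifted: qann_pair br L q w "- p"
    using in_L q_sy[OF u] by unfold_locales (auto simp: w_def p_def)
  have "br p (br p v) = br (br p w) (br q v)"
    using shifted.ad2_via_sy[OF v] by (simp add: bracket_minus_left bracket_minus_right)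
  also have "\<dots> = br p (br w (br q v))"
    using jacobi_left[of p w "br q v"] ad2_q_commute[OF u v] by (simp add: p_def)
  also have "br w (br q v) = br (br s y) (br u (br q v)) + br u (ad2 v)"
    using jacobi_left[of "br s y" u "br q v"] ad2_via_sy[OF v] by (simp add: w_def bracket_minus_right)
  also have "br p (br (br s y) (br u (br q v)) + br u (ad2 v))
      = br p (br (br s y) (br u (br q v))) + br p (br u (ad2 v))"
    by (rule bracket_add_right)
  also have "br p (br (br s y) (br u (br q v))) = br (br s y) (br p (br u (br q v)))"
    using leibniz[of p "br s y"] sy_ad2[OF u] bracket_anticomm[of p "br s y"] by (simp add: p_def)
  also have "br p (br u (br q v)) = br k (br q v)"
    using leibniz[of p u "br q v"] ad2_q_commute[OF u v] by (simp add: k_def p_def)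
  also have "br k (br q v) = br q (br k v)"
    using leibniz[of q k v] k_kernel by simp
  also have "br (br s y) (br q (br k v)) = - ad2 (br k v)"
    using ad2_via_sy[of "br k v"] in_L v by simp
  also have "ad2 (br k v) = br k (ad2 v)"
    using leibniz[of s k v] leibniz[of s k "br s v"] k_kernel(2) by simp
  also have "br k (ad2 v) = br p (br u (ad2 v))"
    using jacobi_left[of p u "ad2 v"] ad2_images_commute[OF u v] by (simp add: k_def p_def)
  finally show ?thesis by (simp add: bracket_add_right p_def)
qed

text \<open>Strong non-degeneracy, applied twice, kills s.\<close>
lemma s_vanishes: "s = 0"
proof (rule nondegenerate[OF s_in])
  fix u assume u: "u \<in> L"
  show "ad2 u = 0"
    using nondegenerate[of "ad2 u"] ad2_absolute_zero_divisor[OF u] u s_in by simp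
qed

end

section \<open>Quasi-annihilators vanish in a weak algebra of quotients\<close>

lemma (in quasi_annihilator) vanishes_in_weak_quotients:
  assumes weak: "weak_algebra_of_quotients br L"
  shows "q = 0"
proof (rule ccontr)
  assume "q \<noteq> 0"
  then obtain x where x: "x \<in> L" "br x q \<noteq> 0" "br x q \<in> L"
    using weak unfolding weak_algebra_of_quotients_def by blast
  have "br q x \<in> L" using x bracket_anticomm[of q x] by simp
  then interpret qann_pair br L q x "br q x" using x by unfold_locales auto
  show False using s_vanishes x bracket_anticomm[of x q] by simp
qed

lemma (in nondegenerate_subring) QAnn_trivial:
  assumes "weak_algebra_of_quotients br L"
  shows "QAnn br UNIV L = {0}"
proof -
  have "q = 0" if "q \<in> QAnn br UNIV L" for q
  proof -
    interpret quasi_annihilator br L q using that by unfold_locales (auto simp: QAnn_def)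
    show ?thesis using vanishes_in_weak_quotients[OF assms] .
  qed
  thus ?thesis by (auto simp: QAnn_def)
qed

lemma (in module) torsion_free_of_unit:
  fixes c :: 'a and v :: 'b
  assumes "of_nat n * c = 1" and "scale (of_nat n) v = 0"
  shows "v = 0"
proof -
  have "v = scale (c * of_nat n) v" using assms(1) by (simp add: mult.commute)
  also have "\<dots> = scale c (scale (of_nat n) v)" by simp
  finally show ?thesis using assms(2) by simp
qed

lemma (in module) scale_two: "scale 2 v = v + v"
  using scale_left_distrib[of 1 1 v] by simp

lemma (in module) scale_three: "scale 3 v = v + v + v"
  using scale_left_distrib[of 2 1 v] scale_two by simp

lemma nondegenerate_subring_of_lie_algebra:
  fixes scale :: "'r::comm_ring_1 \<Rightarrow> 'q::ab_group_add \<Rightarrow> 'q"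
  assumes two: "\<exists>u::'r. 2 * u = 1" and three: "\<exists>v::'r. 3 * v = 1"
    and Q: "lie_algebra scale br" and L: "lie_subalgebra scale br L"
    and snd: "strongly_non_degenerate br L"
  shows "nondegenerate_subring br L"
proof -
  interpret module scale using Q by (simp add: lie_algebra_def)
  have sub: "subspace L" using L by (simp add: lie_subalgebra_def)
  obtain u2 :: 'r where u2: "of_nat 2 * u2 = 1" using two by auto
  obtain u3 :: 'r where u3: "of_nat 3 * u3 = 1" using three by auto
  show ?thesis
  proof
    show "v = 0" if "v + v = 0" for v :: 'q
      by (rule torsion_free_of_unit[OF u2]) (simp add: scale_two that)
    show "v = 0" if "v + v + v = 0" for v :: 'q
      by (rule torsion_free_of_unit[OF u3]) (simp add: scale_three that)
    show "x = 0" if "x \<in> L" "\<And>v. v \<in> L \<Longrightarrow> br x (br x v) = 0" for x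
      using snd that unfolding strongly_non_degenerate_def absolute_zero_divisor_def by blast
  qed (use Q L sub in \<open>auto simp: lie_algebra_def lie_subalgebra_def
         intro: subspace_0 subspace_add subspace_neg\<close>)
qed

lemma (in lie_ring) Ann_subset_QAnn: "Ann br X Y \<subseteq> QAnn br X Y"
  by (auto simp: Ann_def QAnn_def)

lemma absolute_zero_divisor_in_QAnn:
  "absolute_zero_divisor br UNIV x \<Longrightarrow> x \<in> QAnn br UNIV L"
  by (auto simp: absolute_zero_divisor_def QAnn_def)

theorem theorem2p2:
  fixes scale :: "'r::comm_ring_1 \<Rightarrow> 'q::ab_group_add \<Rightarrow> 'q"
    and br :: "'q \<Rightarrow> 'q \<Rightarrow> 'q"
    and L :: "'q set"
  assumes two_inv: "\<exists>u::'r. 2 * u = 1"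
    and three_inv: "\<exists>v::'r. 3 * v = 1"
    and Q_lie: "lie_algebra scale br"
    and L_sub: "lie_subalgebra scale br L"
    and weak: "weak_algebra_of_quotients br L"
    and L_snd: "strongly_non_degenerate br L"
  shows "strongly_non_degenerate br UNIV \<and> Ann br UNIV L = {0} \<and> QAnn br UNIV L = {0}"
proof -
  interpret nondegenerate_subring br L
    by (rule nondegenerate_subring_of_lie_algebra[OF two_inv three_inv Q_lie L_sub L_snd])
  have QAnn: "QAnn br UNIV L = {0}" using QAnn_trivial[OF weak] .
  have "Ann br UNIV L = {0}"
    using Ann_subset_QAnn[of UNIV L] QAnn by (auto simp: Ann_def)
  moreover have "strongly_non_degenerate br UNIV"
    using absolute_zero_divisor_in_QAnn QAnn
    unfolding strongly_non_degenerate_def by blast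
  ultimately show ?thesis using QAnn by simp
qed

end
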